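(* Let $k,n\ge1$ and $T:\{0,1\}^k\to\{0,1\}$ be a truth table. Assume that for every triple $(\mathbf z^{[1]},\mathbf z^{[0]},\mathbf z^{[-1]})$ of $n$-bit strings and every nonempty $S\subseteq\{1,0,-1\}$, the probability $\mathbf E_\sigma\mathbf 1[\mathbf z^{[t]}\not\vdash\sigma\ \forall t\in S]$ depends on the triple only through its configuration basis numbers $(n_s)_{s\in\{0,1\}^3}$ and is a polynomial in the quantities $n_s+n_{\bar s}$. Then for every function $f:\{0,1\}^3\to\mathbb C$, the expectation $$\mathbf E_\sigma f\big(\mathbf 1[\mathbf z^{[1]}\not\vdash\sigma],\mathbf 1[\mathbf z^{[0]}\not\vdash\sigma],\mathbf 1[\mathbf z^{[-1]}\not\vdash\sigma]\big)$$ is a polynomial in the quantities $n_s+n_{\bar s}$, $s\in\{0,1\}^3$.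
   Context: A clause on $n$ variables is $\sigma=((l_0,\nu_0),\dots,(l_{k-1},\nu_{k-1}))$ with $l_q\in\{0,\dots,n-1\}$, $\nu_q\in\{0,1\}$; $\mathbf x\in\{0,1\}^n$ satisfies $\sigma$ ($\mathbf x\vdash\sigma$) iff $T(x_{l_0}\oplus\nu_0,\dots,x_{l_{k-1}}\oplus\nu_{k-1})=1$, and violates it ($\mathbf x\not\vdash\sigma$) otherwise. A random clause has all $l_q$ independent uniform in $\{0,\dots,n-1\}$ and all $\nu_q$ independent uniform in $\{0,1\}$; $\mathbf E_\sigma$ is expectation over it. Configuration basis numbers of the triple: $n_s=|\{j:(z^{[1]}_j,z^{[0]}_j,z^{[-1]}_j)=s\}|$; $\bar s$ is the bitwise complement of $s$. *)

theory Defs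
  imports Complex_Main
begin

type_synonym clause = "(nat \<times> bool) list"
type_synonym config = "bool \<times> bool \<times> bool"

definition clauses :: "nat \<Rightarrow> nat \<Rightarrow> clause set" where
  "clauses n k = {\<sigma>. length \<sigma> = k \<and> (\<forall>p\<in>set \<sigma>. fst p < n)}"

definition Eclause :: "nat \<Rightarrow> nat \<Rightarrow> (clause \<Rightarrow> 'a::field) \<Rightarrow> 'a" where
  "Eclause n k g = (\<Sum>\<sigma>\<in>clauses n k. g \<sigma>) / of_nat (card (clauses n k))"

definition sat :: "(bool list \<Rightarrow> bool) \<Rightarrow> (nat \<Rightarrow> bool) \<Rightarrow> clause \<Rightarrow> bool" where
  "sat T x \<sigma> = T (map (\<lambda>(l, \<nu>). x l \<noteq> \<nu>) \<sigma>)"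

text \<open>Configuration basis numbers n_s of the triple z 1, z 0, z (-1).\<close>
definition cfg_num :: "nat \<Rightarrow> (int \<Rightarrow> nat \<Rightarrow> bool) \<Rightarrow> config \<Rightarrow> nat" where
  "cfg_num n z s = card {j. j < n \<and> (z 1 j, z 0 j, z (-1) j) = s}"

definition compl_cfg :: "config \<Rightarrow> config" where
  "compl_cfg s = (case s of (a, b, c) \<Rightarrow> (\<not> a, \<not> b, \<not> c))"

definition sym_num :: "nat \<Rightarrow> (int \<Rightarrow> nat \<Rightarrow> bool) \<Rightarrow> config \<Rightarrow> nat" where
  "sym_num n z s = cfg_num n z s + cfg_num n z (compl_cfg s)"

definition is_poly :: "((config \<Rightarrow> nat) \<Rightarrow> 'a::comm_ring_1) \<Rightarrow> bool" where
  "is_poly P \<longleftrightarrow> (\<exists>(D::nat) (c :: (config \<Rightarrow> nat) \<Rightarrow> 'a).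
     \<forall>m. P m = (\<Sum>e\<in>{e. \<forall>s. e s \<le> D}. c e * (\<Prod>s\<in>UNIV. of_nat (m s) ^ e s)))"

end

theory Submission
  imports Defs "HOL-Library.FuncSet"
begin

text \<open>
  Moebius inversion on the subsets of \<open>{1, 0, -1}\<close> writes \<open>f\<close>, evaluated at the set of
  strings violating \<open>\<sigma>\<close>, as a linear combination of the indicators of the events
  "every \<open>z t\<close> with \<open>t \<in> S\<close> violates \<open>\<sigma>\<close>".  Expectation is linear, so the expectation
  of \<open>f\<close> is the same combination of the probabilities in the hypothesis, which are polynomials
  in the \<open>sym_num\<close> values; the term for \<open>S = {}\<close> does not depend on the strings at all.
\<close>

lemma finite_bounded_exponents: "finite {e :: 'a::finite \<Rightarrow> nat. \<forall>s. e s \<le> D}"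
proof -
  have "{e :: 'a \<Rightarrow> nat. \<forall>s. e s \<le> D} \<subseteq> PiE UNIV (\<lambda>_. {..D})"
    by (auto simp: PiE_def Pi_def)
  then show ?thesis
    by (rule finite_subset) (intro finite_PiE, auto)
qed

lemma sum_bounded_exponents_mono:
  fixes M :: "('a::finite \<Rightarrow> nat) \<Rightarrow> 'b::comm_monoid_add"
  assumes "D \<le> D'"
  shows "(\<Sum>e\<in>{e. \<forall>s. e s \<le> D}. M e)
       = (\<Sum>e\<in>{e. \<forall>s. e s \<le> D'}. if \<forall>s. e s \<le> D then M e else 0)"
proof -
  have "{e \<in> {e :: 'a \<Rightarrow> nat. \<forall>s. e s \<le> D'}. \<forall>s. e s \<le> D} = {e. \<forall>s. e s \<le> D}"
    using assms order_trans by blast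
  then show ?thesis
    by (simp add: sum.inter_filter[OF finite_bounded_exponents, symmetric])
qed

lemma is_poly_const: "is_poly (\<lambda>m. c)"
proof -
  have "{e :: config \<Rightarrow> nat. \<forall>s. e s \<le> 0} = {\<lambda>_. 0}"
    by auto
  then show ?thesis
    unfolding is_poly_def by (intro exI[of _ 0] exI[of _ "\<lambda>e. c"]) simp
qed

lemma is_poly_add:
  fixes P Q :: "(config \<Rightarrow> nat) \<Rightarrow> 'a::comm_ring_1"
  assumes "is_poly P" and "is_poly Q"
  shows "is_poly (\<lambda>m. P m + Q m)"
proof -
  obtain D1 c1 where P: "\<And>m. P m = (\<Sum>e\<in>{e. \<forall>s. e s \<le> D1}. c1 e * (\<Prod>s\<in>UNIV. of_nat (m s) ^ e s))"
    using assms(1) unfolding is_poly_def by blast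
  obtain D2 c2 where Q: "\<And>m. Q m = (\<Sum>e\<in>{e. \<forall>s. e s \<le> D2}. c2 e * (\<Prod>s\<in>UNIV. of_nat (m s) ^ e s))"
    using assms(2) unfolding is_poly_def by blast
  define c where "c e = (if \<forall>s. e s \<le> D1 then c1 e else 0) + (if \<forall>s. e s \<le> D2 then c2 e else 0)"
    for e :: "config \<Rightarrow> nat"
  show ?thesis
    unfolding is_poly_def
  proof (intro exI[of _ "max D1 D2"] exI[of _ c] allI)
    fix m :: "config \<Rightarrow> nat"
    show "P m + Q m = (\<Sum>e\<in>{e. \<forall>s. e s \<le> max D1 D2}. c e * (\<Prod>s\<in>UNIV. of_nat (m s) ^ e s))"
      unfolding P Q
        sum_bounded_exponents_mono[OF max.cobounded1[of D1 D2]]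
        sum_bounded_exponents_mono[OF max.cobounded2[of D2 D1]]
      by (simp add: c_def sum.distrib distrib_right if_distrib[of "\<lambda>x. x * _"] cong: if_cong)
  qed
qed

lemma is_poly_sum:
  fixes P :: "'i \<Rightarrow> (config \<Rightarrow> nat) \<Rightarrow> 'a::comm_ring_1"
  assumes "\<And>i. i \<in> A \<Longrightarrow> is_poly (P i)"
  shows "is_poly (\<lambda>m. \<Sum>i\<in>A. P i m)"
  using assms
proof (induction A rule: infinite_finite_induct)
  case (insert i A)
  then show ?case
    by (simp add: is_poly_add)
qed (simp_all add: is_poly_const)

lemma is_poly_scaled_of_real:
  fixes P :: "(config \<Rightarrow> nat) \<Rightarrow> real" and a :: "'a::{comm_ring_1, real_algebra_1}"
  assumes "is_poly P"
  shows "is_poly (\<lambda>m. a * of_real (P m))"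
proof -
  obtain D c where P: "\<And>m. P m = (\<Sum>e\<in>{e. \<forall>s. e s \<le> D}. c e * (\<Prod>s\<in>UNIV. of_nat (m s) ^ e s))"
    using assms unfolding is_poly_def by blast
  show ?thesis
    unfolding is_poly_def
    by (intro exI[of _ D] exI[of _ "\<lambda>e. a * of_real (c e)"] allI)
      (simp add: P sum_distrib_left mult.assoc)
qed

definition moebius :: "('a set \<Rightarrow> 'b::ring_1) \<Rightarrow> 'a set \<Rightarrow> 'b" where
  "moebius h S = (-1) ^ card S * (\<Sum>T\<in>Pow S. (-1) ^ card T * h T)"

lemma sum_moebius:
  fixes h :: "'a set \<Rightarrow> 'b::ring_1"
  assumes "finite S"
  shows "h S = (\<Sum>T\<in>Pow S. moebius h T)"
  unfolding moebius_def
  by (rule inclusion_exclusion_symmetric[OF refl assms])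

lemma sum_moebius_indicator:
  fixes h :: "'a set \<Rightarrow> 'b::ring_1"
  assumes "finite I"
  shows "h {t\<in>I. P t} = (\<Sum>S\<in>Pow I. moebius h S * (if \<forall>t\<in>S. P t then 1 else 0))"
proof -
  have "{S \<in> Pow I. \<forall>t\<in>S. P t} = Pow {t\<in>I. P t}"
    by auto
  then show ?thesis
    using sum_moebius[of "{t\<in>I. P t}" h] assms
    by (simp add: if_distrib[of "\<lambda>x. _ * x"] sum.inter_filter[symmetric] cong: if_cong)
qed

lemma Eclause_sum: "Eclause n k (\<lambda>\<sigma>. \<Sum>i\<in>A. g i \<sigma>) = (\<Sum>i\<in>A. Eclause n k (g i))"
  unfolding Eclause_def by (simp add: sum.swap[of _ A] sum_divide_distrib)

lemma Eclause_cmult: "Eclause n k (\<lambda>\<sigma>. c * g \<sigma>) = c * Eclause n k g"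
  unfolding Eclause_def by (simp add: sum_distrib_left)

lemma Eclause_of_real:
  "Eclause n k (\<lambda>\<sigma>. of_real (g \<sigma>) :: 'a::real_field) = of_real (Eclause n k g)"
  unfolding Eclause_def by simp

lemma Eclause_set_function_poly:
  fixes h :: "'i set \<Rightarrow> 'a::real_field" and P :: "'i set \<Rightarrow> (config \<Rightarrow> nat) \<Rightarrow> real"
    and m :: "'z \<Rightarrow> config \<Rightarrow> nat"
  assumes "finite I"
    and poly: "\<And>S. S \<subseteq> I \<Longrightarrow> is_poly (P S)"
    and prob: "\<And>S z. S \<subseteq> I \<Longrightarrow> Eclause n k (\<lambda>\<sigma>. if \<forall>t\<in>S. A z t \<sigma> then 1 else 0) = P S (m z)"
  shows "\<exists>Q. is_poly Q \<and> (\<forall>z. Eclause n k (\<lambda>\<sigma>. h {t\<in>I. A z t \<sigma>}) = Q (m z))"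
proof (intro exI[of _ "\<lambda>\<mu>. \<Sum>S\<in>Pow I. moebius h S * of_real (P S \<mu>)"] conjI allI)
  show "is_poly (\<lambda>\<mu>. \<Sum>S\<in>Pow I. moebius h S * of_real (P S \<mu>))"
    using poly by (intro is_poly_sum is_poly_scaled_of_real) auto
next
  fix z
  have "h {t\<in>I. A z t \<sigma>} = (\<Sum>S\<in>Pow I. moebius h S * of_real (if \<forall>t\<in>S. A z t \<sigma> then 1 else 0))"
    for \<sigma>
    using sum_moebius_indicator[OF \<open>finite I\<close>, of h "\<lambda>t. A z t \<sigma>"]
    by (simp add: if_distrib[of of_real] cong: if_cong)
  then show "Eclause n k (\<lambda>\<sigma>. h {t\<in>I. A z t \<sigma>}) = (\<Sum>S\<in>Pow I. moebius h S * of_real (P S (m z)))"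
    by (simp add: Eclause_sum Eclause_cmult Eclause_of_real prob)
qed

theorem mainTheorem5:
  fixes k n :: nat and T :: "bool list \<Rightarrow> bool"
  assumes "k \<ge> 1" and "n \<ge> 1"
  assumes hyp: "\<And>S :: int set. S \<subseteq> {1, 0, -1} \<Longrightarrow> S \<noteq> {} \<Longrightarrow>
      (\<forall>z z'. cfg_num n z = cfg_num n z' \<longrightarrow>
          Eclause n k (\<lambda>\<sigma>. if \<forall>t\<in>S. \<not> sat T (z t) \<sigma> then 1 else 0)
        = (Eclause n k (\<lambda>\<sigma>. if \<forall>t\<in>S. \<not> sat T (z' t) \<sigma> then 1 else 0) :: real))
      \<and> (\<exists>P :: (config \<Rightarrow> nat) \<Rightarrow> real. is_poly P \<and>
           (\<forall>z. Eclause n k (\<lambda>\<sigma>. if \<forall>t\<in>S. \<not> sat T (z t) \<sigma> then 1 else 0)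
                = P (sym_num n z)))"
  shows "\<forall>f :: config \<Rightarrow> complex. \<exists>P :: (config \<Rightarrow> nat) \<Rightarrow> complex. is_poly P \<and>
           (\<forall>z. Eclause n k (\<lambda>\<sigma>. f (\<not> sat T (z 1) \<sigma>, \<not> sat T (z 0) \<sigma>, \<not> sat T (z (-1)) \<sigma>))
                = P (sym_num n z))"
proof (intro allI)
  fix f :: "config \<Rightarrow> complex"
  have "\<exists>P. is_poly P \<and>
      (\<forall>z. Eclause n k (\<lambda>\<sigma>. if \<forall>t\<in>S. \<not> sat T (z t) \<sigma> then 1 else 0 :: real) = P (sym_num n z))"
    if "S \<subseteq> {1, 0, -1}" for S
  proof (cases "S = {}")
    case True
    then show ?thesis
      by (intro exI[of _ "\<lambda>_. Eclause n k (\<lambda>_. 1)"]) (simp add: is_poly_const)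
  qed (use hyp[OF that] in blast)
  then obtain P :: "int set \<Rightarrow> (config \<Rightarrow> nat) \<Rightarrow> real" where "\<And>S. S \<subseteq> {1, 0, -1} \<Longrightarrow>
      is_poly (P S) \<and> (\<forall>z. Eclause n k (\<lambda>\<sigma>. if \<forall>t\<in>S. \<not> sat T (z t) \<sigma> then 1 else 0) = P S (sym_num n z))"
    by atomize_elim (rule choice, blast)
  then have "\<exists>Q. is_poly Q \<and> (\<forall>z. Eclause n k (\<lambda>\<sigma>. (\<lambda>X. f (1 \<in> X, 0 \<in> X, -1 \<in> X))
      {t\<in>{1, 0, -1}. \<not> sat T (z t) \<sigma>}) = Q (sym_num n z))"
    by (intro Eclause_set_function_poly) auto
  then show "\<exists>Q. is_poly Q \<and>
      (\<forall>z. Eclause n k (\<lambda>\<sigma>. f (\<not> sat T (z 1) \<sigma>, \<not> sat T (z 0) \<sigma>, \<not> sat T (z (-1)) \<sigma>)) = Q (sym_num n z))"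
    by simp
qed

end
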